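(* Let $E$ be a (Hausdorff, real) locally convex space with an $\omega^\omega$-base whose Hamel basis is uncountable. Then $E$ contains an infinite-dimensional metrizable compact subset.
   Context: A topological vector space $E$ has an $\omega^\omega$-base if there is a neighborhood base $\{U_\alpha:\alpha\in\omega^\omega\}$ at zero such that $U_\beta\subseteq U_\alpha$ whenever $\alpha\le\beta$, where $\omega^\omega$ is the set of all functions $\omega\to\omega$ ordered pointwise ($\alpha\le\beta$ iff $\alpha(n)\le\beta(n)$ for all $n$). A compact set is infinite-dimensional if its linear span is infinite-dimensional (equivalently here, it has infinite topological dimension). *)

theory Defs
  imports "HOL-Analysis.Analysis"
begin

definition real_tvs :: "'a::{real_vector,topological_space} itself \<Rightarrow> bool" where
  "real_tvs _ \<longleftrightarrow>
     continuous_on UNIV (\<lambda>p::'a \<times> 'a. fst p + snd p) \<and>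
     continuous_on UNIV (\<lambda>p::real \<times> 'a. fst p *\<^sub>R snd p)"

definition locally_convex :: "'a::{real_vector,topological_space} itself \<Rightarrow> bool" where
  "locally_convex _ \<longleftrightarrow>
     (\<forall>W::'a set. open W \<and> 0 \<in> W \<longrightarrow> (\<exists>V. open V \<and> convex V \<and> 0 \<in> V \<and> V \<subseteq> W))"

definition has_omega_omega_base :: "'a::{real_vector,topological_space} itself \<Rightarrow> bool" where
  "has_omega_omega_base _ \<longleftrightarrow>
     (\<exists>U :: (nat \<Rightarrow> nat) \<Rightarrow> 'a set.
        (\<forall>\<alpha>. 0 \<in> interior (U \<alpha>)) \<and>
        (\<forall>W. open W \<and> 0 \<in> W \<longrightarrow> (\<exists>\<alpha>. U \<alpha> \<subseteq> W)) \<and>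
        (\<forall>\<alpha> \<beta>. (\<forall>n. \<alpha> n \<le> \<beta> n) \<longrightarrow> U \<beta> \<subseteq> U \<alpha>))"

definition infinite_dimensional :: "'a::real_vector set \<Rightarrow> bool" where
  "infinite_dimensional K \<longleftrightarrow> \<not> (\<exists>B. finite B \<and> span K \<subseteq> span B)"

end

theory Submission
  imports Defs
begin

(*
  By local convexity, shrinking each member of the \<omega>^\<omega>-base to its star-shaped core gives
  an \<omega>^\<omega>-base V of star-shaped neighbourhoods of zero.  For a finite sequence s let D s be
  the intersection of all V \<beta> with \<beta> extending s.  For every \<alpha> and every vector v some
  v/(k+1) lies in D (\<alpha>|k): otherwise the witnesses \<beta>_k are dominated by a single \<beta>, and
  v/(k+1) -> 0 would never enter V \<beta>.

  So the set S v of finite sequences s such that D s contains a positive multiple of v contains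
  an initial segment of every \<alpha>.  Coding finite sequences by natural numbers makes S v a point
  of Cantor space, and since B is uncountable there are distinct g_j in B and some b such that
  S (g_j) and S b agree on the first j codes.  Scaling g_j into the finitely many star-shaped D s with s in S (g_j) and
  code at most j yields a null sequence x_j = t_j g_j: given V \<alpha>, pick \<alpha>|k in S b; then
  x_j lies in D (\<alpha>|k), a subset of V \<alpha>, once j exceeds the code of \<alpha>|k.  Finally {0}
  together with the x_j is compact, homeomorphic to {0} together with the 1/(j+1) and thus
  metrizable, and its span contains the independent g_j.
*)

lemma homeomorphic_imp_homeomorphic_space:
  assumes "S homeomorphic T"
  shows "top_of_set S homeomorphic_space top_of_set T"
proof -
  obtain f g where "homeomorphism S T f g"
    using assms unfolding homeomorphic_def by blast
  then have "homeomorphic_maps (top_of_set S) (top_of_set T) f g"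
    unfolding homeomorphism_def homeomorphic_maps_def by auto
  then show ?thesis
    unfolding homeomorphic_space_def by blast
qed

lemma compact_convergent_sequence:
  fixes x :: "nat \<Rightarrow> 'a::topological_space"
  assumes "x \<longlonglongrightarrow> l"
  shows "compact (insert l (range x))"
  using compactin_sequence_with_limit[of euclidean x l "range x"] assms by simp

lemma continuous_on_convergent_sequence:
  fixes y :: "nat \<Rightarrow> 'a::t2_space" and h :: "'a \<Rightarrow> 'b::topological_space"
  assumes "y \<longlonglongrightarrow> m" and "m \<notin> range y" and "(\<lambda>j. h (y j)) \<longlonglongrightarrow> h m"
  shows "continuous_on (insert m (range y)) h"
  unfolding continuous_on_eq_continuous_within
proof
  fix z
  show "continuous (at z within insert m (range y)) h"
  proof (cases "z = m")
    case True
    show ?thesis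
      unfolding continuous_within True
    proof (rule topological_tendstoI)
      fix W assume "open W" "h m \<in> W"
      then obtain J where J: "\<And>j. j \<ge> J \<Longrightarrow> h (y j) \<in> W"
        using assms(3) by (auto simp: tendsto_def eventually_sequentially)
      have "open (- y ` {..<J})"
        by (simp add: finite_imp_closed open_Compl)
      moreover have "m \<in> - y ` {..<J}"
        using assms(2) by blast
      moreover have "h z' \<in> W" if z': "z' \<in> - y ` {..<J}" "z' \<in> insert m (range y)" "z' \<noteq> m" for z'
      proof -
        obtain j where "z' = y j"
          using z'(2,3) by blast
        with z'(1) have "j \<ge> J"
          by (auto simp: not_less[symmetric])
        then show ?thesis
          using J \<open>z' = y j\<close> by simp
      qed
      ultimately show "eventually (\<lambda>z. h z \<in> W) (at m within insert m (range y))"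
        unfolding eventually_at_topological by blast
    qed
  next
    case False
    then have "\<not> z islimpt insert m (range y)"
      using sequence_unique_limpt[OF assms(1)] by (auto simp: islimpt_insert)
    then show ?thesis
      by (intro continuous_trivial_limit) (simp add: trivial_limit_within)
  qed
qed

lemma homeomorphic_convergent_sequences:
  fixes x :: "nat \<Rightarrow> 'a::t2_space" and y :: "nat \<Rightarrow> 'b::t2_space"
  assumes x: "x \<longlonglongrightarrow> l" "inj x" "l \<notin> range x"
    and y: "y \<longlonglongrightarrow> m" "inj y" "m \<notin> range y"
  shows "insert m (range y) homeomorphic insert l (range x)"
proof -
  define h where "h z = (if z \<in> range y then x (inv y z) else l)" for z
  have "h \<circ> y = x"
    using y(2) by (simp add: fun_eq_iff h_def)
  have "h m = l"
    using y(3) by (simp add: h_def)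
  have "compact (insert m (range y))"
    by (rule compact_convergent_sequence[OF y(1)])
  moreover have "continuous_on (insert m (range y)) h"
    by (rule continuous_on_convergent_sequence[OF y(1,3)])
      (use x(1) \<open>h \<circ> y = x\<close> \<open>h m = l\<close> in \<open>simp add: comp_def\<close>)
  moreover have "h ` insert m (range y) = insert l (range x)"
    using \<open>h \<circ> y = x\<close> \<open>h m = l\<close> by (simp add: image_comp)
  moreover have "inj_on h (insert m (range y))"
  proof -
    have "inj_on h (range y)"
      using inj_on_imageI[of h y UNIV] x(2) \<open>h \<circ> y = x\<close> by simp
    moreover have "h m \<notin> h ` range y"
      using x(3) \<open>h m = l\<close> by (simp add: image_comp \<open>h \<circ> y = x\<close>)
    moreover have "range y - {m} = range y"
      using y(3) by blast
    ultimately show ?thesis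
      unfolding inj_on_insert by (simp only: simp_thms)
  qed
  ultimately show ?thesis
    by (rule homeomorphic_compact)
qed

lemma metrizable_space_convergent_sequence:
  fixes x :: "nat \<Rightarrow> 'a::t2_space"
  assumes "x \<longlonglongrightarrow> l" "inj x" "l \<notin> range x"
  shows "metrizable_space (top_of_set (insert l (range x)))"
proof -
  have "insert 0 (range (\<lambda>j. inverse (real (Suc j)))) homeomorphic insert l (range x)"
    by (rule homeomorphic_convergent_sequences[OF assms LIMSEQ_inverse_real_of_nat])
      (auto simp: inj_def)
  then have "top_of_set (insert 0 (range (\<lambda>j. inverse (real (Suc j)))))
      homeomorphic_space top_of_set (insert l (range x))"
    by (rule homeomorphic_imp_homeomorphic_space)
  then show ?thesis
    by (rule homeomorphic_metrizable_space[THEN iffD1,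
          OF _ metrizable_space_subtopology[OF metrizable_space_euclidean]])
qed

lemma inj_scaleR_independent_seq:
  fixes g :: "nat \<Rightarrow> 'a::real_vector"
  assumes "independent (range g)" and "inj g" and "\<And>j. t j \<noteq> 0"
  shows "inj (\<lambda>j. t j *\<^sub>R g j)"
proof (rule injI)
  fix i j
  assume eq: "t i *\<^sub>R g i = t j *\<^sub>R g j"
  show "i = j"
  proof (rule ccontr)
    assume "i \<noteq> j"
    then have "g j \<in> range g - {g i}"
      using assms(2) by (auto simp: inj_eq)
    have "g i = inverse (t i) *\<^sub>R (t j *\<^sub>R g j)"
      using eq assms(3)[of i] by (metis scaleR_scaleR left_inverse scaleR_one)
    also have "\<dots> \<in> span (range g - {g i})"
      using \<open>g j \<in> range g - {g i}\<close> by (intro span_scale span_base)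
    finally have "dependent (range g)"
      using rangeI[of g i] unfolding dependent_def by blast
    with assms(1) show False
      by contradiction
  qed
qed

lemma infinite_dimensionalI:
  assumes "independent S" and "infinite S" and "S \<subseteq> span K"
  shows "infinite_dimensional K"
  unfolding infinite_dimensional_def
  using assms independent_span_bound by (metis subset_trans)

lemma ex_compact_metrizable_infinite_dimensional:
  fixes g :: "nat \<Rightarrow> 'a::{real_vector,t2_space}"
  assumes "independent (range g)" and "inj g" and "\<And>j. t j \<noteq> 0"
    and "(\<lambda>j. t j *\<^sub>R g j) \<longlonglongrightarrow> 0"
  shows "\<exists>K::'a set. compact K \<and> metrizable_space (top_of_set K) \<and> infinite_dimensional K"
proof -
  define x where "x = (\<lambda>j. t j *\<^sub>R g j)"
  have x_lim: "x \<longlonglongrightarrow> 0"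
    using assms(4) unfolding x_def .
  have x_inj: "inj x"
    unfolding x_def by (rule inj_scaleR_independent_seq[OF assms(1-3)])
  have "0 \<notin> range g"
    using assms(1) dependent_zero by blast
  then have x_nz: "0 \<notin> range x"
    by (auto simp: x_def assms(3))
  have "range g \<subseteq> span (insert 0 (range x))"
  proof (rule image_subsetI)
    fix j
    have "inverse (t j) *\<^sub>R x j \<in> span (insert 0 (range x))"
      by (intro span_scale span_base) simp
    then show "g j \<in> span (insert 0 (range x))"
      by (simp add: x_def assms(3))
  qed
  then have "infinite_dimensional (insert 0 (range x))"
    by (rule infinite_dimensionalI[OF assms(1) range_inj_infinite[OF assms(2)]])
  with compact_convergent_sequence[OF x_lim] metrizable_space_convergent_sequence[OF x_lim x_inj x_nz]
  show ?thesis
    by blast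
qed

lemma ex_inj_seq_in_infinite_sets:
  fixes A :: "nat \<Rightarrow> 'a set"
  assumes "\<And>j. infinite (A j)"
  shows "\<exists>g. inj g \<and> (\<forall>j. g j \<in> A j)"
proof -
  have "\<exists>g. \<forall>j. g j \<in> A j - g ` {..<j}"
  proof (rule dependent_wellorder_choice[where P = "\<lambda>g j r. r \<in> A j - g ` {..<j}"])
    fix r and j :: nat and f g :: "nat \<Rightarrow> 'a"
    assume "\<And>i. i < j \<Longrightarrow> f i = g i"
    then have "f ` {..<j} = g ` {..<j}"
      by (intro image_cong) simp_all
    then show "(r \<in> A j - f ` {..<j}) = (r \<in> A j - g ` {..<j})"
      by simp
  next
    fix j :: nat and g :: "nat \<Rightarrow> 'a"
    have "infinite (A j - g ` {..<j})"
      using assms by (simp add: Diff_infinite_finite)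
    then show "\<exists>r. r \<in> A j - g ` {..<j}"
      using infinite_imp_nonempty by blast
  qed
  then obtain g where g: "\<And>j. g j \<in> A j - g ` {..<j}"
    by blast
  have "g i \<noteq> g j" if "i < j" for i j
  proof -
    have "g i \<in> g ` {..<j}"
      using that by simp
    with g[of j] show ?thesis
      by (metis DiffD2)
  qed
  then have "inj g"
    by (rule linorder_injI)
  with g show ?thesis
    by blast
qed

lemma uncountable_ex_inj_seq_prefix_agree:
  fixes f :: "'b \<Rightarrow> nat \<Rightarrow> bool"
  assumes "uncountable B"
  shows "\<exists>b\<in>B. \<exists>g. inj g \<and> range g \<subseteq> B \<and> (\<forall>j. \<forall>n\<le>j. f (g j) n = f b n)"
proof -
  define A where "A b j = {b'\<in>B. \<forall>n\<le>j. f b' n = f b n}" for b j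
  have "\<exists>b\<in>B. \<forall>j. infinite (A b j)"
  proof (rule ccontr)
    assume "\<not> (\<exists>b\<in>B. \<forall>j. infinite (A b j))"
    then obtain J where J: "\<And>b. b \<in> B \<Longrightarrow> finite (A b (J b))"
      by metis
    define code where "code b = (J b, map (f b) [0..<Suc (J b)])" for b
    have "{b'\<in>B. code b' = c} \<subseteq> A b (J b)" if "b \<in> B" "code b = c" for b c
      using that by (auto simp del: upt_Suc simp: A_def code_def map_eq_conv less_Suc_eq_le)
    then have "finite {b'\<in>B. code b' = c}" if "c \<in> code ` B" for c
      using that J finite_subset by blast
    then have "countable (\<Union>c\<in>code ` B. {b'\<in>B. code b' = c})"
      by (intro countable_UN countableI_type countable_finite)
    moreover have "B = (\<Union>c\<in>code ` B. {b'\<in>B. code b' = c})"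
      by auto
    ultimately show False
      using assms by simp
  qed
  then obtain b where b: "b \<in> B" "\<And>j. infinite (A b j)"
    by blast
  then obtain g where "inj g" "\<And>j. g j \<in> A b j"
    using ex_inj_seq_in_infinite_sets by blast
  then show ?thesis
    by (intro bexI[OF _ b(1)] exI[of _ g]) (auto simp: A_def)
qed

lemma real_tvs_scaleR_tendsto_zero:
  fixes b :: "'a::{real_vector,topological_space}"
  assumes "real_tvs TYPE('a)" and "c \<longlonglongrightarrow> 0"
  shows "(\<lambda>k. c k *\<^sub>R b) \<longlonglongrightarrow> 0"
proof -
  have "continuous_on UNIV (\<lambda>p::real \<times> 'a. fst p *\<^sub>R snd p)"
    using assms(1) by (simp add: real_tvs_def)
  then have "continuous_on UNIV ((\<lambda>p. fst p *\<^sub>R snd p) \<circ> (\<lambda>t::real. (t, b)))"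
    by (intro continuous_on_compose continuous_intros) (rule continuous_on_subset, auto)
  then have "continuous_on UNIV (\<lambda>t::real. t *\<^sub>R b)"
    by (simp add: o_def)
  from continuous_on_tendsto_compose[OF this assms(2)] show ?thesis
    by simp
qed

lemma zero_in_interior_star_core:
  fixes U :: "'a::{real_vector,topological_space} set"
  assumes "locally_convex TYPE('a)" and "0 \<in> interior U"
  shows "0 \<in> interior {x. \<forall>t\<in>{0..1}. t *\<^sub>R x \<in> U}"
proof -
  obtain W :: "'a set" where W: "open W" "convex W" "0 \<in> W" "W \<subseteq> interior U"
    using assms unfolding locally_convex_def by (meson open_interior)
  have "t *\<^sub>R x \<in> U" if "x \<in> W" "t \<in> {0..1}" for x t
    using convexD[OF W(2) \<open>x \<in> W\<close> W(3), of t "1 - t"] that W(4) interior_subset by auto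
  then have "W \<subseteq> {x. \<forall>t\<in>{0..1}. t *\<^sub>R x \<in> U}"
    by blast
  then show ?thesis
    using W(1,3) interior_maximal by blast
qed

lemma star_shaped_omega_omega_base:
  assumes "locally_convex TYPE('a)" and "has_omega_omega_base TYPE('a)"
  obtains V :: "(nat \<Rightarrow> nat) \<Rightarrow> 'a::{real_vector,topological_space} set" where
    "\<And>\<alpha>. 0 \<in> interior (V \<alpha>)"
    "\<And>W. open W \<Longrightarrow> 0 \<in> W \<Longrightarrow> \<exists>\<alpha>. V \<alpha> \<subseteq> W"
    "\<And>\<alpha> \<beta>. (\<forall>n. \<alpha> n \<le> \<beta> n) \<Longrightarrow> V \<beta> \<subseteq> V \<alpha>"
    "\<And>\<alpha> x c. x \<in> V \<alpha> \<Longrightarrow> c \<in> {0..1} \<Longrightarrow> c *\<^sub>R x \<in> V \<alpha>"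
proof -
  obtain U :: "(nat \<Rightarrow> nat) \<Rightarrow> 'a set" where
    U: "\<And>\<alpha>. 0 \<in> interior (U \<alpha>)" "\<And>W. open W \<Longrightarrow> 0 \<in> W \<Longrightarrow> \<exists>\<alpha>. U \<alpha> \<subseteq> W"
      "\<And>\<alpha> \<beta>. (\<forall>n. \<alpha> n \<le> \<beta> n) \<Longrightarrow> U \<beta> \<subseteq> U \<alpha>"
    using assms(2) unfolding has_omega_omega_base_def by metis
  define V where "V \<alpha> = {x. \<forall>t\<in>{0..1::real}. t *\<^sub>R x \<in> U \<alpha>}" for \<alpha>
  have V_U: "V \<alpha> \<subseteq> U \<alpha>" for \<alpha>
    by (auto simp: V_def dest: bspec[of _ _ 1])
  show thesis
  proof (rule that)
    show "0 \<in> interior (V \<alpha>)" for \<alpha>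
      unfolding V_def by (rule zero_in_interior_star_core[OF assms(1) U(1)])
    show "\<exists>\<alpha>. V \<alpha> \<subseteq> W" if "open W" "0 \<in> W" for W
      using U(2)[OF that] V_U by blast
    show "V \<beta> \<subseteq> V \<alpha>" if "\<forall>n. \<alpha> n \<le> \<beta> n" for \<alpha> \<beta>
      using U(3)[OF that] by (auto simp: V_def)
    show "c *\<^sub>R x \<in> V \<alpha>" if "x \<in> V \<alpha>" "c \<in> {0..1}" for \<alpha> x c
      using that mult_le_one[of _ c] by (auto simp: V_def)
  qed
qed

definition prefix_core :: "((nat \<Rightarrow> nat) \<Rightarrow> 'a set) \<Rightarrow> nat list \<Rightarrow> 'a set" where
  "prefix_core U s = (\<Inter>\<beta>\<in>{\<beta>. \<forall>i<length s. \<beta> i = s ! i}. U \<beta>)"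

lemma prefix_core_subset: "prefix_core U (map \<alpha> [0..<k]) \<subseteq> U \<alpha>"
  by (auto simp: prefix_core_def)

lemma prefix_core_star:
  fixes V :: "(nat \<Rightarrow> nat) \<Rightarrow> 'a::real_vector set"
  assumes "\<And>\<alpha> x c. x \<in> V \<alpha> \<Longrightarrow> c \<in> {0..1} \<Longrightarrow> c *\<^sub>R x \<in> V \<alpha>"
  shows "x \<in> prefix_core V s \<Longrightarrow> c \<in> {0..1} \<Longrightarrow> c *\<^sub>R x \<in> prefix_core V s"
  using assms by (auto simp: prefix_core_def)

lemma ex_mem_prefix_core:
  fixes U :: "(nat \<Rightarrow> nat) \<Rightarrow> 'a::topological_space set"
  assumes interior: "\<And>\<beta>. p \<in> interior (U \<beta>)"
    and antimono: "\<And>\<alpha> \<beta>. (\<forall>n. \<alpha> n \<le> \<beta> n) \<Longrightarrow> U \<beta> \<subseteq> U \<alpha>"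
    and lim: "y \<longlonglongrightarrow> p"
  shows "\<exists>k. y k \<in> prefix_core U (map \<alpha> [0..<k])"
proof (rule ccontr)
  assume "\<nexists>k. y k \<in> prefix_core U (map \<alpha> [0..<k])"
  then have "\<exists>\<beta>. (\<forall>i<k. \<beta> i = \<alpha> i) \<and> y k \<notin> U \<beta>" for k
    by (auto simp: prefix_core_def)
  then obtain \<beta>s where \<beta>s: "\<And>k. (\<forall>i<k. \<beta>s k i = \<alpha> i) \<and> y k \<notin> U (\<beta>s k)"
    by metis
  \<comment> \<open>For \<open>k > n\<close>, \<open>\<beta>s k n = \<alpha> n\<close>; so \<open>\<beta>\<close> dominates every \<open>\<beta>s k\<close>.\<close>
  define \<beta> where "\<beta> n = (\<Sum>k\<le>n. \<beta>s k n) + \<alpha> n" for n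
  have "\<beta>s k n \<le> \<beta> n" for k n
  proof (cases "k \<le> n")
    case True
    then have "\<beta>s k n \<le> (\<Sum>k\<le>n. \<beta>s k n)"
      by (intro member_le_sum) auto
    then show ?thesis
      by (simp add: \<beta>_def)
  next
    case False
    then show ?thesis
      using \<beta>s[of k] by (simp add: \<beta>_def)
  qed
  then have "y k \<notin> U \<beta>" for k
    using antimono \<beta>s by blast
  moreover have "eventually (\<lambda>k. y k \<in> interior (U \<beta>)) sequentially"
    using lim interior[of \<beta>] by (simp add: topological_tendstoD)
  ultimately show False
    using interior_subset by (metis eventually_sequentially order_refl subsetD)
qed

lemma ex_pos_scaleR_mem_finite_star_sets:
  fixes b :: "'a::real_vector" and D :: "'i \<Rightarrow> 'a set"
  assumes "finite I"
    and star: "\<And>i x c. i \<in> I \<Longrightarrow> x \<in> D i \<Longrightarrow> c \<in> {0..1} \<Longrightarrow> c *\<^sub>R x \<in> D i"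
    and absorb: "\<And>i. i \<in> I \<Longrightarrow> \<exists>t>0. t *\<^sub>R b \<in> D i"
  shows "\<exists>t>0. \<forall>i\<in>I. t *\<^sub>R b \<in> D i"
  using assms
proof (induction I rule: finite_induct)
  case empty
  show ?case
    using zero_less_one by blast
next
  case (insert i I)
  then obtain t\<^sub>I where t\<^sub>I: "t\<^sub>I > 0" "\<forall>i'\<in>I. t\<^sub>I *\<^sub>R b \<in> D i'"
    by blast
  obtain t\<^sub>i where t\<^sub>i: "t\<^sub>i > 0" "t\<^sub>i *\<^sub>R b \<in> D i"
    using insert.prems(2) by blast
  define t where "t = min t\<^sub>I t\<^sub>i"
  have "t *\<^sub>R b \<in> D i'" if "i' \<in> insert i I" "s > 0" "s *\<^sub>R b \<in> D i'" "t \<le> s" for i' s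
  proof -
    have "t / s \<in> {0..1}"
      using that t\<^sub>I t\<^sub>i by (auto simp: t_def)
    then have "(t / s) *\<^sub>R (s *\<^sub>R b) \<in> D i'"
      using insert.prems(1) that(1,3) by blast
    then show ?thesis
      using \<open>s > 0\<close> by simp
  qed
  then show ?case
    using t\<^sub>I t\<^sub>i by (intro exI[of _ t]) (auto simp: t_def)
qed

lemma ex_pos_scaleR_mem_prefix_core:
  fixes V :: "(nat \<Rightarrow> nat) \<Rightarrow> 'a::{real_vector,topological_space} set"
  assumes "real_tvs TYPE('a)"
    and interior: "\<And>\<alpha>. 0 \<in> interior (V \<alpha>)"
    and antimono: "\<And>\<alpha> \<beta>. (\<forall>n. \<alpha> n \<le> \<beta> n) \<Longrightarrow> V \<beta> \<subseteq> V \<alpha>"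
  shows "\<exists>k. \<exists>t>0. t *\<^sub>R b \<in> prefix_core V (map \<alpha> [0..<k])"
proof -
  have "(\<lambda>k. inverse (real (Suc k)) *\<^sub>R b) \<longlonglongrightarrow> 0"
    by (rule real_tvs_scaleR_tendsto_zero[OF assms(1) LIMSEQ_inverse_real_of_nat])
  from ex_mem_prefix_core[where U = V and p = 0, OF interior antimono this]
  obtain k where "inverse (real (Suc k)) *\<^sub>R b \<in> prefix_core V (map \<alpha> [0..<k])"
    by blast
  then show ?thesis
    by (intro exI[of _ k] exI[of _ "inverse (real (Suc k))"]) simp
qed

lemma uncountable_ex_null_seq_of_multiples:
  fixes V :: "(nat \<Rightarrow> nat) \<Rightarrow> 'a::{real_vector,topological_space} set" and B :: "'a set"
  assumes tvs: "real_tvs TYPE('a)"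
    and interior: "\<And>\<alpha>. 0 \<in> interior (V \<alpha>)"
    and base: "\<And>W. open W \<Longrightarrow> 0 \<in> W \<Longrightarrow> \<exists>\<alpha>. V \<alpha> \<subseteq> W"
    and antimono: "\<And>\<alpha> \<beta>. (\<forall>n. \<alpha> n \<le> \<beta> n) \<Longrightarrow> V \<beta> \<subseteq> V \<alpha>"
    and star: "\<And>\<alpha> x c. x \<in> V \<alpha> \<Longrightarrow> c \<in> {0..1} \<Longrightarrow> c *\<^sub>R x \<in> V \<alpha>"
    and "uncountable B"
  shows "\<exists>g t. inj g \<and> range g \<subseteq> B \<and> (\<forall>j. t j > 0) \<and> (\<lambda>j. t j *\<^sub>R g j) \<longlonglongrightarrow> 0"
proof -
  define S where "S b = {s. \<exists>t>0. t *\<^sub>R b \<in> prefix_core V s}" for b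
  have absorb: "\<exists>k. map \<alpha> [0..<k] \<in> S b" for \<alpha> b
    unfolding S_def mem_Collect_eq
    by (rule ex_pos_scaleR_mem_prefix_core[where V = V, OF tvs interior antimono])
  obtain b g where g: "inj g" "range g \<subseteq> B"
    and agree: "\<forall>j. \<forall>n\<le>j. ((from_nat n :: nat list) \<in> S (g j)) = (from_nat n \<in> S b)"
    using uncountable_ex_inj_seq_prefix_agree[OF \<open>uncountable B\<close>,
        of "\<lambda>b n. (from_nat n :: nat list) \<in> S b"] by blast
  define L where "L j = {s \<in> S (g j). to_nat s \<le> j}" for j
  have ex_t: "\<exists>t>0. \<forall>s\<in>L j. t *\<^sub>R g j \<in> prefix_core V s" for j
  proof (rule ex_pos_scaleR_mem_finite_star_sets)
    show "finite (L j)"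
      unfolding L_def
      by (rule finite_subset[OF _ finite_vimageI[of "{..j}" to_nat]]) (auto simp: inj_to_nat)
    show "c *\<^sub>R x \<in> prefix_core V s" if "s \<in> L j" "x \<in> prefix_core V s" "c \<in> {0..1}" for s x c
      by (rule prefix_core_star[where V = V, OF star that(2,3)])
    show "\<exists>t>0. t *\<^sub>R g j \<in> prefix_core V s" if "s \<in> L j" for s
      using that by (simp add: L_def S_def)
  qed
  define t where "t j = (SOME t. t > 0 \<and> (\<forall>s\<in>L j. t *\<^sub>R g j \<in> prefix_core V s))" for j
  have t: "t j > 0" and t_mem: "\<forall>s\<in>L j. t j *\<^sub>R g j \<in> prefix_core V s" for j
    using someI_ex[OF ex_t[of j]] by (simp_all add: t_def)
  have lim: "(\<lambda>j. t j *\<^sub>R g j) \<longlonglongrightarrow> 0"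
  proof (rule topological_tendstoI)
    fix W :: "'a set"
    assume "open W" "0 \<in> W"
    then obtain \<alpha> where "V \<alpha> \<subseteq> W"
      using base by blast
    obtain k where k: "map \<alpha> [0..<k] \<in> S b"
      using absorb by blast
    have "t j *\<^sub>R g j \<in> W" if "to_nat (map \<alpha> [0..<k]) \<le> j" for j
    proof -
      have "map \<alpha> [0..<k] \<in> L j"
        using agree[rule_format, OF that] k that by (simp add: L_def)
      then have "t j *\<^sub>R g j \<in> prefix_core V (map \<alpha> [0..<k])"
        using t_mem[of j] by blast
      then show ?thesis
        using prefix_core_subset[of V \<alpha> k] \<open>V \<alpha> \<subseteq> W\<close> by blast
    qed
    then show "eventually (\<lambda>j. t j *\<^sub>R g j \<in> W) sequentially"
      unfolding eventually_sequentially by blast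
  qed
  show ?thesis
    using g t lim by (intro exI[of _ g] exI[of _ t]) simp
qed

theorem theorem1p2:
  assumes "real_tvs TYPE('a::{real_vector,t2_space})"
    and "locally_convex TYPE('a)"
    and "has_omega_omega_base TYPE('a)"
    and "\<exists>B::'a set. independent B \<and> span B = UNIV \<and> uncountable B"
  shows "\<exists>K::'a set. compact K \<and> metrizable_space (subtopology euclidean K) \<and> infinite_dimensional K"
proof -
  obtain V :: "(nat \<Rightarrow> nat) \<Rightarrow> 'a set" where
    V: "\<And>\<alpha>. 0 \<in> interior (V \<alpha>)" "\<And>W. open W \<Longrightarrow> 0 \<in> W \<Longrightarrow> \<exists>\<alpha>. V \<alpha> \<subseteq> W"
      "\<And>\<alpha> \<beta>. (\<forall>n. \<alpha> n \<le> \<beta> n) \<Longrightarrow> V \<beta> \<subseteq> V \<alpha>"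
      "\<And>\<alpha> x c. x \<in> V \<alpha> \<Longrightarrow> c \<in> {0..1} \<Longrightarrow> c *\<^sub>R x \<in> V \<alpha>"
    using star_shaped_omega_omega_base[OF assms(2,3)] by blast
  obtain B :: "'a set" where B: "independent B" "uncountable B"
    using assms(4) by blast
  obtain g t where g: "inj g" "range g \<subseteq> B" and t: "\<And>j. t j > 0"
    and lim: "(\<lambda>j. t j *\<^sub>R g j) \<longlonglongrightarrow> 0"
    using uncountable_ex_null_seq_of_multiples[where V = V, OF assms(1) V B(2)] by blast
  have "t j \<noteq> 0" for j
    using t[of j] by simp
  then show ?thesis
    by (rule ex_compact_metrizable_infinite_dimensional[OF independent_mono[OF B(1) g(2)] g(1) _ lim])
qed

end
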